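(* Let $\langle\mathcal U,\mathcal S,k\rangle$ be an instance of Set Cover as in the context and $D_{SC}$ the associated digraph with functions $F,B$. If there exists a set cover of size $k$ (a $k$-element subfamily of $\mathcal S$ whose union is $\mathcal U$), then the ST problem for $(D_{SC},F,B)$ has a positive answer.
   Context: Snow Team problem (ST): given a digraph $D=(\mathcal V,\mathcal A)$ whose underlying graph is connected, and $F:\mathcal V\to\{0,1\}$, $B:\mathcal V\to\mathbb N$, with $\mathbf k_B=\sum_vB(v)$: do there exist $\mathbf k_B$ directed walks, exactly $B(v)$ of which start at each $v$, such that, letting $H$ be the subgraph consisting of the vertices and arcs of these walks, all vertices of $F^{-1}(1)$ lie in one connected component of the underlying undirected graph of $H$? Such walks form a solution. Construction: $\mathcal U=\{1,\dots,n\}$, $\mathcal S=\{S_1,\dots,S_m\}$ with $S_t\subseteq\mathcal U$, $\bigcup_tS_t=\mathcal U$, and $1\le k\le m$. Write $S_t=\{x_1<\dots<x_{\ell(t)}\}$ and $I_i=\{j: i\in S_j\}$. The digraph $D_{SC}$ has vertices $u_i$ ($i\in\mathcal U$); $u_{i,j},u'_{i,j},v_{i,j},v'_{i,j}$ ($i\in\mathcal U$, $j\in I_i$); and $z,z_1,\dots,z_k$. Its arcs are those of the vertical paths $P_{i,j}=(u_{i,j},u_i,u'_{i,j},v_{i,j},v'_{i,j})$ ($i\in\mathcal U,j\in I_i$), of the horizontal paths $P^h_t=(z,v_{x_1,t},v_{x_2,t},\dots,v_{x_{\ell(t)},t})$ ($t\in\{1,\dots,m\}$, with $x_1<\dots<x_{\ell(t)}$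 the elements of $S_t$), and the arcs $(z_l,z)$ for $l=1,\dots,k$. The $i$-th element component $C_i$ is the subgraph induced by $\bigcup_{j\in I_i}V(P_{i,j})$. Set $F(v)=1$ for all vertices $v$, and $B(v)=1$ if $v$ is a source of $D_{SC}$ (i.e. $v\in\{u_{i,j}\}\cup\{z_1,\dots,z_k\}$) and $B(v)=0$ otherwise. *)

theory Defs
  imports Main
begin

definition walk_arcs :: "'v list \<Rightarrow> ('v \<times> 'v) set" where
  "walk_arcs w = set (zip w (tl w))"

definition dwalk :: "'v set \<Rightarrow> ('v \<times> 'v) set \<Rightarrow> 'v list \<Rightarrow> bool" where
  "dwalk V A w \<longleftrightarrow> w \<noteq> [] \<and> set w \<subseteq> V \<and> walk_arcs w \<subseteq> A"

definition H_verts :: "'v list list \<Rightarrow> 'v set" where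
  "H_verts ws = (\<Union>w\<in>set ws. set w)"

definition H_arcs :: "'v list list \<Rightarrow> ('v \<times> 'v) set" where
  "H_arcs ws = (\<Union>w\<in>set ws. walk_arcs w)"

definition st_solution ::
  "'v set \<Rightarrow> ('v \<times> 'v) set \<Rightarrow> ('v \<Rightarrow> nat) \<Rightarrow> ('v \<Rightarrow> nat) \<Rightarrow> 'v list list \<Rightarrow> bool" where
  "st_solution V A F B ws \<longleftrightarrow>
     (\<forall>w\<in>set ws. dwalk V A w) \<and>
     length ws = (\<Sum>v\<in>V. B v) \<and>
     (\<forall>v\<in>V. length (filter (\<lambda>w. hd w = v) ws) = B v) \<and>
     {v\<in>V. F v = 1} \<subseteq> H_verts ws \<and>
     (\<forall>x\<in>{v\<in>V. F v = 1}. \<forall>y\<in>{v\<in>V. F v = 1}.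
        (x, y) \<in> (H_arcs ws \<union> (H_arcs ws)\<inverse>)\<^sup>*)"

definition st_positive :: "'v set \<Rightarrow> ('v \<times> 'v) set \<Rightarrow> ('v \<Rightarrow> nat) \<Rightarrow> ('v \<Rightarrow> nat) \<Rightarrow> bool" where
  "st_positive V A F B \<longleftrightarrow> (\<exists>ws. st_solution V A F B ws)"

definition is_source :: "'v set \<Rightarrow> ('v \<times> 'v) set \<Rightarrow> 'v \<Rightarrow> bool" where
  "is_source V A v \<longleftrightarrow> v \<in> V \<and> (\<nexists>u. (u, v) \<in> A)"

text \<open>Universe {1..n}, family S 1, ..., S m (indexed by {1..m}), budget k.\<close>

datatype vtx = U nat | Uij nat nat | Uij' nat nat | Vij nat nat | Vij' nat nat | Z | Zl nat

definition Iset :: "nat \<Rightarrow> (nat \<Rightarrow> nat set) \<Rightarrow> nat \<Rightarrow> nat set" where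
  "Iset m S i = {j\<in>{1..m}. i \<in> S j}"

definition dsc_V :: "nat \<Rightarrow> nat \<Rightarrow> nat \<Rightarrow> (nat \<Rightarrow> nat set) \<Rightarrow> vtx set" where
  "dsc_V n m k S =
     U ` {1..n}
     \<union> (\<Union>i\<in>{1..n}. \<Union>j\<in>Iset m S i. {Uij i j, Uij' i j, Vij i j, Vij' i j})
     \<union> {Z} \<union> Zl ` {1..k}"

definition vert_path :: "nat \<Rightarrow> nat \<Rightarrow> vtx list" where
  "vert_path i j = [Uij i j, U i, Uij' i j, Vij i j, Vij' i j]"

definition horiz_path :: "(nat \<Rightarrow> nat set) \<Rightarrow> nat \<Rightarrow> vtx list" where
  "horiz_path S t = Z # map (\<lambda>x. Vij x t) (sorted_list_of_set (S t))"

definition dsc_A :: "nat \<Rightarrow> nat \<Rightarrow> nat \<Rightarrow> (nat \<Rightarrow> nat set) \<Rightarrow> (vtx \<times> vtx) set" where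
  "dsc_A n m k S =
     (\<Union>i\<in>{1..n}. \<Union>j\<in>Iset m S i. walk_arcs (vert_path i j))
     \<union> (\<Union>t\<in>{1..m}. walk_arcs (horiz_path S t))
     \<union> (\<lambda>l. (Zl l, Z)) ` {1..k}"

definition dsc_F :: "vtx \<Rightarrow> nat" where
  "dsc_F v = 1"

definition dsc_B :: "nat \<Rightarrow> nat \<Rightarrow> nat \<Rightarrow> (nat \<Rightarrow> nat set) \<Rightarrow> vtx \<Rightarrow> nat" where
  "dsc_B n m k S v = (if is_source (dsc_V n m k S) (dsc_A n m k S) v then 1 else 0)"

end

theory Submission
  imports Defs
begin

text \<open>Fix a cover \<open>S (c 1), \<dots>, S (c k)\<close>. Let each source \<open>u_{i,j}\<close> walk along its vertical
  path \<open>P_{i,j}\<close>, and each source \<open>z_l\<close> walk to \<open>z\<close> and on along the horizontal path of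
  \<open>S (c l)\<close>. If the element \<open>i\<close> lies in \<open>S (c l)\<close>, then \<open>v_{i,c l}\<close> lies on the walk of \<open>z_l\<close> and
  on that of \<open>u_{i,c l}\<close>, which links \<open>u_i\<close> to \<open>z\<close>; and every vertex of the element component
  \<open>C_i\<close> lies on a walk through \<open>u_i\<close>. So every vertex is covered by the walks and connected to \<open>z\<close>.\<close>

abbreviation undirected_reach :: "('v \<times> 'v) set \<Rightarrow> ('v \<times> 'v) set" where
  "undirected_reach E \<equiv> (E \<union> E\<inverse>)\<^sup>*"

lemma sym_undirected_reach: "sym (undirected_reach E)"
  by (simp add: sym_Un_converse sym_rtrancl)

lemma walk_arcs_Cons_Cons: "walk_arcs (a # b # w) = insert (a, b) (walk_arcs (b # w))"
  by (simp add: walk_arcs_def)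

lemma walk_arcs_subset: "walk_arcs w \<subseteq> set w \<times> set w"
  by (cases w) (auto simp: walk_arcs_def dest: set_zip_leftD set_zip_rightD)

lemma walk_arcs_target: "(a, b) \<in> walk_arcs w \<Longrightarrow> b \<in> set (tl w)"
  by (auto simp: walk_arcs_def dest: set_zip_rightD)

lemma hd_walk_reaches: "x \<in> set w \<Longrightarrow> (hd w, x) \<in> (walk_arcs w)\<^sup>*"
proof (induction w rule: induct_list012)
  case (3 a b w)
  have "(hd (b # w), x) \<in> (walk_arcs (a # b # w))\<^sup>*" if "x \<in> set (b # w)"
    using "3.IH"(2)[OF that] rtrancl_mono[of "walk_arcs (b # w)"]
    by (auto simp: walk_arcs_Cons_Cons)
  then show ?case
    using "3.prems" by (auto simp: walk_arcs_Cons_Cons intro: converse_rtrancl_into_rtrancl)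
qed auto

lemma walk_vertices_connected:
  assumes "x \<in> X" "a \<in> set (wk x)" "b \<in> set (wk x)"
  shows "(a, b) \<in> undirected_reach (\<Union>x\<in>X. walk_arcs (wk x))"
proof -
  let ?E = "\<Union>x\<in>X. walk_arcs (wk x)"
  have "(walk_arcs (wk x))\<^sup>* \<subseteq> undirected_reach ?E"
    using assms(1) by (intro rtrancl_mono) blast
  then have "(hd (wk x), a) \<in> undirected_reach ?E" "(hd (wk x), b) \<in> undirected_reach ?E"
    using hd_walk_reaches[OF assms(2)] hd_walk_reaches[OF assms(3)] by blast+
  then show ?thesis
    by (blast intro: rtrancl_trans dest: symD[OF sym_undirected_reach])
qed

lemma st_positive_by_hub:
  fixes wk :: "'v \<Rightarrow> 'v list" and X :: "'v set"
  defines "E \<equiv> \<Union>x\<in>X. walk_arcs (wk x)"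
  assumes "finite V" "X \<subseteq> V"
    and budget: "\<And>v. v \<in> V \<Longrightarrow> B v = (if v \<in> X then 1 else 0)"
    and walks: "\<And>x. x \<in> X \<Longrightarrow> dwalk V A (wk x) \<and> hd (wk x) = x"
    and hub: "z \<in> (\<Union>x\<in>X. set (wk x))"
    and reach: "\<And>v. v \<in> V \<Longrightarrow> F v = 1 \<Longrightarrow> (z, v) \<in> undirected_reach E"
  shows "st_positive V A F B"
proof -
  obtain xs where xs: "set xs = X" "distinct xs"
    using finite_distinct_list finite_subset[OF \<open>X \<subseteq> V\<close> \<open>finite V\<close>] by blast
  define ws where "ws = map wk xs"
  have arcs: "H_arcs ws = E" and verts: "H_verts ws = (\<Union>x\<in>X. set (wk x))"
    by (auto simp: H_arcs_def H_verts_def E_def ws_def xs(1))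
  have "Field E \<subseteq> H_verts ws"
    using walk_arcs_subset by (fastforce simp: verts E_def Field_def)
  have covered: "v \<in> H_verts ws" if "(z, v) \<in> undirected_reach E" for v
  proof -
    from that have "v = z \<or> v \<in> Field E"
      by (cases rule: rtranclE) (auto simp: Field_def)
    then show ?thesis
      using \<open>Field E \<subseteq> H_verts ws\<close> hub verts by blast
  qed
  have count: "length (filter (\<lambda>w. hd w = v) ws) = (if v \<in> X then 1 else 0)" for v
  proof -
    have "filter ((\<lambda>w. hd w = v) \<circ> wk) xs = filter (\<lambda>x. x = v) xs"
      using walks xs(1) by (intro filter_cong) auto
    then show ?thesis
      using distinct_length_filter[OF xs(2)] xs(1) by (simp add: ws_def filter_map Collect_conv_if)
  qed
  have "(\<Sum>v\<in>V. B v) = (\<Sum>v\<in>V. if v \<in> X then 1 else 0)"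
    using budget by (intro sum.cong) simp_all
  also have "\<dots> = card (V \<inter> X)"
    using \<open>finite V\<close> by (simp add: sum.If_cases)
  also have "\<dots> = length ws"
    using \<open>X \<subseteq> V\<close> distinct_card[OF xs(2)] xs(1) by (simp add: ws_def Int_absorb1)
  finally have length: "length ws = (\<Sum>v\<in>V. B v)" ..
  have connected: "(v, v') \<in> undirected_reach E"
    if "v \<in> V" "F v = 1" "v' \<in> V" "F v' = 1" for v v'
    using rtrancl_trans[OF symD[OF sym_undirected_reach reach[OF that(1,2)]] reach[OF that(3,4)]] .
  have "st_solution V A F B ws"
    unfolding st_solution_def arcs
  proof (intro conjI ballI)
    show "dwalk V A w" if "w \<in> set ws" for w
      using that walks xs(1) by (auto simp: ws_def)
    show "length ws = (\<Sum>v\<in>V. B v)"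
      by (fact length)
    show "length (filter (\<lambda>w. hd w = v) ws) = B v" if "v \<in> V" for v
      using count budget that by simp
    show "{v \<in> V. F v = 1} \<subseteq> H_verts ws"
      using covered reach by blast
    show "(v, v') \<in> undirected_reach E"
      if "v \<in> {v \<in> V. F v = 1}" "v' \<in> {v \<in> V. F v = 1}" for v v'
      using connected that by blast
  qed
  then show ?thesis
    unfolding st_positive_def by blast
qed

lemma mem_dsc_V [simp]:
  shows "U i \<in> dsc_V n m k S \<longleftrightarrow> i \<in> {1..n}"
    and "Uij i j \<in> dsc_V n m k S \<longleftrightarrow> i \<in> {1..n} \<and> j \<in> Iset m S i"
    and "Uij' i j \<in> dsc_V n m k S \<longleftrightarrow> i \<in> {1..n} \<and> j \<in> Iset m S i"
    and "Vij i j \<in> dsc_V n m k S \<longleftrightarrow> i \<in> {1..n} \<and> j \<in> Iset m S i"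
    and "Vij' i j \<in> dsc_V n m k S \<longleftrightarrow> i \<in> {1..n} \<and> j \<in> Iset m S i"
    and "Z \<in> dsc_V n m k S"
    and "Zl l \<in> dsc_V n m k S \<longleftrightarrow> l \<in> {1..k}"
  by (auto simp: dsc_V_def)

lemma dsc_V_cases:
  assumes "v \<in> dsc_V n m k S"
  obtains "v = Z"
    | l where "l \<in> {1..k}" "v = Zl l"
    | i where "i \<in> {1..n}" "v = U i"
    | i j where "Uij i j \<in> dsc_V n m k S" "v \<in> set (vert_path i j)"
  using assms by (cases v) (auto simp: vert_path_def)

lemma finite_dsc_V: "finite (dsc_V n m k S)"
  by (simp add: dsc_V_def Iset_def)

lemma set_horiz_path: "finite (S t) \<Longrightarrow> set (horiz_path S t) = insert Z ((\<lambda>x. Vij x t) ` S t)"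
  by (simp add: horiz_path_def)

lemma dsc_A_target:
  assumes "(u, v) \<in> dsc_A n m k S"
  shows "v \<noteq> Uij i j" and "v \<noteq> Zl l"
  using assms by (auto simp: dsc_A_def vert_path_def horiz_path_def dest!: walk_arcs_target)

lemma is_source_Uij:
  "Uij i j \<in> dsc_V n m k S \<Longrightarrow> is_source (dsc_V n m k S) (dsc_A n m k S) (Uij i j)"
  by (auto simp: is_source_def dest: dsc_A_target)

lemma is_source_Zl:
  "Zl l \<in> dsc_V n m k S \<Longrightarrow> is_source (dsc_V n m k S) (dsc_A n m k S) (Zl l)"
  by (auto simp: is_source_def dest: dsc_A_target)

lemma dwalk_vert_path:
  assumes "Uij i j \<in> dsc_V n m k S"
  shows "dwalk (dsc_V n m k S) (dsc_A n m k S) (vert_path i j)"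
proof -
  have "walk_arcs (vert_path i j) \<subseteq> dsc_A n m k S"
    using assms unfolding dsc_A_def by auto
  then show ?thesis
    using assms by (simp add: dwalk_def vert_path_def)
qed

lemma dwalk_Zl_horiz_path:
  assumes "Zl l \<in> dsc_V n m k S" "t \<in> {1..m}" "S t \<subseteq> {1..n}"
  shows "dwalk (dsc_V n m k S) (dsc_A n m k S) (Zl l # horiz_path S t)"
proof -
  have "set (horiz_path S t) \<subseteq> dsc_V n m k S"
    using assms(2,3) finite_subset[OF assms(3)] by (auto simp: set_horiz_path Iset_def)
  moreover have "walk_arcs (Zl l # horiz_path S t) \<subseteq> dsc_A n m k S"
    using assms(1,2) by (auto simp: dsc_A_def horiz_path_def walk_arcs_Cons_Cons)
  ultimately show ?thesis
    using assms(1) by (simp add: dwalk_def)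
qed

text \<open>Here \<open>c l\<close> is the index of the \<open>l\<close>-th set of the cover.\<close>

definition cover_walk :: "(nat \<Rightarrow> nat set) \<Rightarrow> (nat \<Rightarrow> nat) \<Rightarrow> vtx \<Rightarrow> vtx list" where
  "cover_walk S c v =
     (case v of Uij i j \<Rightarrow> vert_path i j | Zl l \<Rightarrow> Zl l # horiz_path S (c l) | _ \<Rightarrow> [v])"

lemma hd_cover_walk [simp]: "hd (cover_walk S c v) = v"
  by (cases v) (simp_all add: cover_walk_def vert_path_def)

lemma dwalk_cover_walk:
  assumes "\<forall>t\<in>{1..m}. S t \<subseteq> {1..n}" "c ` {1..k} \<subseteq> {1..m}" "v \<in> dsc_V n m k S"
  shows "dwalk (dsc_V n m k S) (dsc_A n m k S) (cover_walk S c v)"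
proof (cases v)
  case (Uij i j)
  then show ?thesis
    using assms(3) dwalk_vert_path by (simp add: cover_walk_def)
next
  case (Zl l)
  then have "l \<in> {1..k}"
    using assms(3) by simp
  then have "c l \<in> {1..m}"
    using assms(2) by blast
  then show ?thesis
    using Zl assms(1,3) dwalk_Zl_horiz_path by (simp add: cover_walk_def)
qed (use assms(3) in \<open>simp_all add: cover_walk_def dwalk_def walk_arcs_def\<close>)

lemma cover_walks_reach_Z:
  fixes X :: "vtx set" and S :: "nat \<Rightarrow> nat set" and c :: "nat \<Rightarrow> nat"
  defines "E \<equiv> \<Union>x\<in>X. walk_arcs (cover_walk S c x)"
  assumes S: "\<forall>t\<in>{1..m}. S t \<subseteq> {1..n}"
    and c: "c ` {1..k} \<subseteq> {1..m}" and cover: "{1..n} \<subseteq> (\<Union>l\<in>{1..k}. S (c l))"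
    and Uij_X: "\<And>i j. Uij i j \<in> dsc_V n m k S \<Longrightarrow> Uij i j \<in> X"
    and Zl_X: "\<And>l. Zl l \<in> dsc_V n m k S \<Longrightarrow> Zl l \<in> X"
    and "v \<in> dsc_V n m k S"
  shows "(Z, v) \<in> undirected_reach E"
proof -
  have on_walk: "(a, b) \<in> undirected_reach E"
    if "x \<in> X" "a \<in> set (cover_walk S c x)" "b \<in> set (cover_walk S c x)" for x a b
    using walk_vertices_connected[where wk = "cover_walk S c", OF that] by (simp add: E_def)
  have Z_Zl: "(Z, Zl l) \<in> undirected_reach E" if "l \<in> {1..k}" for l
    using on_walk[of "Zl l"] Zl_X that by (simp add: cover_walk_def horiz_path_def)
  have U_vert: "(U i, a) \<in> undirected_reach E"
    if "Uij i j \<in> dsc_V n m k S" "a \<in> set (vert_path i j)" for i j a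
    using on_walk[of "Uij i j"] Uij_X that by (simp add: cover_walk_def vert_path_def)
  have Z_U: "(Z, U i) \<in> undirected_reach E" if i: "i \<in> {1..n}" for i
  proof -
    obtain l where l: "l \<in> {1..k}" "i \<in> S (c l)"
      using cover i by blast
    then have t: "c l \<in> {1..m}"
      using c by blast
    then have "finite (S (c l))"
      using S by (meson finite_atLeastAtMost finite_subset)
    have Uij: "Uij i (c l) \<in> dsc_V n m k S"
      using i l(2) t by (simp add: Iset_def)
    have "(Z, Vij i (c l)) \<in> undirected_reach E"
      using on_walk[of "Zl l"] Zl_X l \<open>finite (S (c l))\<close>
      by (simp add: cover_walk_def set_horiz_path)
    also have "(Vij i (c l), U i) \<in> undirected_reach E"
      using symD[OF sym_undirected_reach U_vert[OF Uij]] by (simp add: vert_path_def)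
    finally show ?thesis .
  qed
  have Z_vert: "(Z, a) \<in> undirected_reach E"
    if "Uij i j \<in> dsc_V n m k S" "a \<in> set (vert_path i j)" for i j a
  proof -
    have "i \<in> {1..n}"
      using that(1) by simp
    from rtrancl_trans[OF Z_U[OF this] U_vert[OF that]] show ?thesis .
  qed
  from \<open>v \<in> dsc_V n m k S\<close> show ?thesis
    by (cases rule: dsc_V_cases) (auto intro: Z_Zl Z_U Z_vert)
qed

theorem lemma5:
  fixes n m k :: nat and S :: "nat \<Rightarrow> nat set"
  assumes "\<forall>t\<in>{1..m}. S t \<subseteq> {1..n}"
    and "(\<Union>t\<in>{1..m}. S t) = {1..n}"
    and "1 \<le> k" and "k \<le> m"
    and "\<exists>C\<subseteq>{1..m}. card C = k \<and> (\<Union>t\<in>C. S t) = {1..n}"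
  shows "st_positive (dsc_V n m k S) (dsc_A n m k S) dsc_F (dsc_B n m k S)"
proof -
  obtain C where C: "C \<subseteq> {1..m}" "card C = k" "(\<Union>t\<in>C. S t) = {1..n}"
    using assms(5) by blast
  then obtain c where c: "bij_betw c {1..k} C"
    using ex_bij_betw_nat_finite_1 finite_subset by (metis finite_atLeastAtMost)
  then have c_range: "c ` {1..k} \<subseteq> {1..m}"
    using C(1) by (simp add: bij_betw_def)
  have cover: "{1..n} \<subseteq> (\<Union>l\<in>{1..k}. S (c l))"
    using C(3) bij_betw_imp_surj_on[OF c] by (metis image_image subset_refl)
  let ?V = "dsc_V n m k S" and ?A = "dsc_A n m k S"
  let ?X = "{v \<in> ?V. is_source ?V ?A v}"
  show ?thesis
  proof (rule st_positive_by_hub[where X = ?X and wk = "cover_walk S c" and z = Z])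
    show "Z \<in> (\<Union>x\<in>?X. set (cover_walk S c x))"
      using assms(3) is_source_Zl[of 1] by (force simp: cover_walk_def horiz_path_def)
    show "(Z, v) \<in> undirected_reach (\<Union>x\<in>?X. walk_arcs (cover_walk S c x))" if "v \<in> ?V" for v
      by (rule cover_walks_reach_Z[OF assms(1) c_range cover _ _ that])
        (simp_all add: is_source_Uij is_source_Zl)
  qed (use assms(1) c_range finite_dsc_V dwalk_cover_walk in \<open>auto simp: dsc_B_def\<close>)
qed

end
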